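(* For each integer $r\ge 2$, the matrix $A_r$ is $2$-modular.
   Context: An integer matrix $A$ is $\Delta$-modular if the determinant of every $\operatorname{rank}(A)\times\operatorname{rank}(A)$ submatrix has absolute value at most $\Delta$. $D_r$ denotes the $r\times\binom r2$ matrix whose columns are all vectors in $\mathbb{Z}^r$ with exactly two nonzero entries, the first (topmost) equal to $1$ and the second equal to $-1$. $A_r$ is the $r\times(\binom{r+2}{2}-2)$ matrix $[\,I_r\mid D_r\mid B_r\,]$, where $B_r$ is the $r\times(r-1)$ matrix whose first row consists entirely of $1$'s and whose remaining $r-1$ rows form $I_{r-1}$. *)

theory Defs
  imports "Jordan_Normal_Form.DL_Rank_Submatrix"
begin

definition int_mat_rank :: "int mat \<Rightarrow> nat" where
  "int_mat_rank A = vec_space.rank (dim_row A) (map_mat rat_of_int A :: rat mat)"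

definition delta_modular :: "int \<Rightarrow> int mat \<Rightarrow> bool" where
  "delta_modular \<Delta> A \<longleftrightarrow>
     (\<forall>I J. I \<subseteq> {..<dim_row A} \<longrightarrow> J \<subseteq> {..<dim_col A} \<longrightarrow>
            card I = int_mat_rank A \<longrightarrow> card J = int_mat_rank A \<longrightarrow>
            \<bar>det (submatrix A I J)\<bar> \<le> \<Delta>)"

definition I_cols :: "nat \<Rightarrow> int vec list" where
  "I_cols r = [unit_vec r i. i \<leftarrow> [0..<r]]"

definition D_cols :: "nat \<Rightarrow> int vec list" where
  "D_cols r = [vec r (\<lambda>k. if k = i then 1 else if k = j then -1 else 0).
                 i \<leftarrow> [0..<r], j \<leftarrow> [Suc i..<r]]"

(* columns of B_r: first row all ones, remaining r-1 rows form I_{r-1} *)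
definition B_cols :: "nat \<Rightarrow> int vec list" where
  "B_cols r = [vec r (\<lambda>k. if k = 0 \<or> k = Suc c then 1 else 0). c \<leftarrow> [0..<r - 1]]"

definition D_mat :: "nat \<Rightarrow> int mat" where
  "D_mat r = mat_of_cols r (D_cols r)"

definition B_mat :: "nat \<Rightarrow> int mat" where
  "B_mat r = mat_of_cols r (B_cols r)"

definition A_mat :: "nat \<Rightarrow> int mat" where
  "A_mat r = mat_of_cols r (I_cols r @ D_cols r @ B_cols r)"

end

theory Submission
  imports Defs
begin

(* Every column of A_r is an incidence column (entries in {-1, 0, 1}, at most one 1 and at
   most one -1: the columns of I_r and D_r) or an apex column e_0 + e_k with k > 0 (the columns
   of B_r). The identity block gives rank r, so only r x r submatrices with all rows matter.
   A square matrix of incidence columns has determinant in {-1, 0, 1}: either some column has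
   at most one nonzero entry and Laplace expansion along it reduces the size, or each column
   contains one 1 and one -1 and the rows sum to zero. If a square submatrix has apex columns,
   subtracting one of them, e_0 + e_k0, from the others turns these into incidence columns
   e_k - e_k0 without changing the determinant; expansion along the remaining apex column
   leaves two cofactors, each of absolute value at most 1. *)

definition incidence_col :: "nat \<Rightarrow> (nat \<Rightarrow> 'a :: linordered_idom) \<Rightarrow> bool" where
  "incidence_col n c \<longleftrightarrow> (\<forall>i<n. c i \<in> {-1, 0, 1}) \<and>
     (\<forall>a<n. \<forall>b<n. c a = 1 \<longrightarrow> c b = 1 \<longrightarrow> a = b) \<and>
     (\<forall>a<n. \<forall>b<n. c a = -1 \<longrightarrow> c b = -1 \<longrightarrow> a = b)"

definition apex_col :: "nat \<Rightarrow> (nat \<Rightarrow> 'a :: linordered_idom) \<Rightarrow> bool" where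
  "apex_col n c \<longleftrightarrow> (\<exists>k. 0 < k \<and> k < n \<and> (\<forall>i<n. c i = (if i = 0 \<or> i = k then 1 else 0)))"

lemma incidence_col_cong: "(\<And>i. i < n \<Longrightarrow> c i = d i) \<Longrightarrow> incidence_col n c \<longleftrightarrow> incidence_col n d"
  by (simp add: incidence_col_def)

lemma apex_col_cong: "(\<And>i. i < n \<Longrightarrow> c i = d i) \<Longrightarrow> apex_col n c \<longleftrightarrow> apex_col n d"
  by (simp add: apex_col_def)

lemma incidence_col_insert_index:
  assumes "incidence_col (Suc m) c"
  shows "incidence_col m (c \<circ> insert_index i)"
proof -
  have lt: "insert_index i a < Suc m" if "a < m" for a
    using that by (simp add: insert_index_def)
  have inj: "a = b" if "insert_index i a = insert_index i b" for a b
    using that by (simp add: insert_index_def split: if_splits)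
  show ?thesis
    using assms lt inj unfolding incidence_col_def comp_def by meson
qed

lemma incidence_col_cases:
  assumes "incidence_col n c" and "0 < n"
  obtains a b where "a < n" "b < n" "c a = 1" "c b = -1" "\<And>i. i < n \<Longrightarrow> i \<noteq> a \<Longrightarrow> i \<noteq> b \<Longrightarrow> c i = 0"
  | i0 where "i0 < n" "\<And>i. i < n \<Longrightarrow> i \<noteq> i0 \<Longrightarrow> c i = 0"
proof (cases "(\<exists>a<n. c a = 1) \<and> (\<exists>b<n. c b = -1)")
  case True
  then obtain a b where "a < n" "b < n" "c a = 1" "c b = -1" by blast
  with assms(1) show ?thesis
    by (intro that(1)[of a b]) (auto simp: incidence_col_def)
next
  case False
  show ?thesis
  proof (cases "\<exists>a<n. c a \<noteq> 0")
    case True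
    then obtain a where "a < n" "c a \<noteq> 0" by blast
    have "c i = 0" if "i < n" "i \<noteq> a" for i
    proof (rule ccontr)
      assume "c i \<noteq> 0"
      with assms(1) \<open>a < n\<close> \<open>c a \<noteq> 0\<close> that have "c i \<in> {-1, 1}" "c a \<in> {-1, 1}"
        by (auto simp: incidence_col_def)
      with False assms(1) \<open>a < n\<close> that show False
        by (auto simp: incidence_col_def)
    qed
    with \<open>a < n\<close> show ?thesis by (rule that(2))
  next
    case False
    with assms(2) show ?thesis by (intro that(2)[of 0]) auto
  qed
qed

lemma laplace_expansion_column_support:
  fixes M :: "'a :: comm_ring_1 mat"
  assumes M: "M \<in> carrier_mat n n" and j: "j < n" and S: "S \<subseteq> {..<n}"
    and zero: "\<And>i. i < n \<Longrightarrow> i \<notin> S \<Longrightarrow> M $$ (i, j) = 0"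
  shows "det M = (\<Sum>i\<in>S. M $$ (i, j) * cofactor M i j)"
proof -
  have "det M = (\<Sum>i<n. M $$ (i, j) * cofactor M i j)"
    by (rule laplace_expansion_column[OF M j])
  also have "\<dots> = (\<Sum>i\<in>S. M $$ (i, j) * cofactor M i j)"
    by (rule sum.mono_neutral_right) (use S zero in auto)
  finally show ?thesis .
qed

lemma det_eq_0_if_col_sums_0:
  fixes M :: "'a :: idom mat"
  assumes M: "M \<in> carrier_mat n n" and "0 < n" and sums: "\<And>j. j < n \<Longrightarrow> (\<Sum>i<n. M $$ (i, j)) = 0"
  shows "det M = 0"
proof -
  let ?v = "vec n (\<lambda>_. 1 :: 'a)"
  have Mt: "transpose_mat M \<in> carrier_mat n n" using M by simp
  have "transpose_mat M *\<^sub>v ?v = 0\<^sub>v n"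
  proof (rule eq_vecI)
    fix j assume "j < dim_vec (0\<^sub>v n)"
    then have j: "j < n" by simp
    have "(transpose_mat M *\<^sub>v ?v) $ j = (\<Sum>i<n. M $$ (i, j))"
      using M j by (simp add: scalar_prod_def col_def lessThan_atLeast0)
    then show "(transpose_mat M *\<^sub>v ?v) $ j = 0\<^sub>v n $ j" using sums j by simp
  qed (use M in simp)
  moreover have "?v \<noteq> 0\<^sub>v n"
    using \<open>0 < n\<close> by (metis index_vec index_zero_vec(1) zero_neq_one)
  ultimately have "det (transpose_mat M) = 0"
    unfolding det_0_iff_vec_prod_zero[OF Mt] by (intro exI[of _ ?v]) auto
  then show ?thesis using det_transpose[OF M] by simp
qed

lemma incidence_cols_mat_delete:
  assumes M: "M \<in> carrier_mat n n" and i: "i < n" and j: "j < n"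
    and cols: "\<And>j'. j' < n \<Longrightarrow> j' \<noteq> j \<Longrightarrow> incidence_col n (\<lambda>a. M $$ (a, j'))"
  shows "\<And>j'. j' < n - 1 \<Longrightarrow> incidence_col (n - 1) (\<lambda>a. mat_delete M i j $$ (a, j'))"
proof -
  fix j' assume "j' < n - 1"
  obtain m where n: "n = Suc m" using i by (cases n) auto
  with \<open>j' < n - 1\<close> have j': "j' < m" by simp
  have "insert_index j j' < Suc m" "insert_index j j' \<noteq> j"
    using j' by (auto simp: insert_index_def)
  then have "incidence_col m ((\<lambda>a. M $$ (a, insert_index j j')) \<circ> insert_index i)"
    by (intro incidence_col_insert_index cols[unfolded n])
  moreover have "mat_delete M i j $$ (a, j') = M $$ (insert_index i a, insert_index j j')" if "a < m" for a
    using mat_delete_index[OF M[unfolded n] i[unfolded n] j[unfolded n] that j'] by simp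
  ultimately show "incidence_col (n - 1) (\<lambda>a. mat_delete M i j $$ (a, j'))"
    unfolding n by (subst incidence_col_cong) auto
qed

theorem abs_det_le_1_if_incidence_cols:
  fixes M :: "'a :: linordered_idom mat"
  assumes "M \<in> carrier_mat n n" and "\<And>j. j < n \<Longrightarrow> incidence_col n (\<lambda>i. M $$ (i, j))"
  shows "\<bar>det M\<bar> \<le> 1"
  using assms
proof (induction n arbitrary: M)
  case 0
  then show ?case by (simp add: det_def)
next
  case (Suc m)
  note M = Suc.prems(1) and cols = Suc.prems(2)
  show ?case
  proof (cases "\<exists>j<Suc m. \<exists>i0<Suc m. \<forall>i<Suc m. i \<noteq> i0 \<longrightarrow> M $$ (i, j) = 0")
    case True
    then obtain j i0 where j: "j < Suc m" and i0: "i0 < Suc m"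
      and zero: "\<And>i. i < Suc m \<Longrightarrow> i \<noteq> i0 \<Longrightarrow> M $$ (i, j) = 0" by blast
    have "det M = M $$ (i0, j) * cofactor M i0 j"
      using laplace_expansion_column_support[OF M j, of "{i0}"] i0 zero by simp
    moreover have "\<bar>M $$ (i0, j)\<bar> \<le> 1"
      using cols[OF j] i0 by (auto simp: incidence_col_def)
    moreover have "\<bar>cofactor M i0 j\<bar> \<le> 1"
    proof -
      have "incidence_col m (\<lambda>a. mat_delete M i0 j $$ (a, j'))" if "j' < m" for j'
        using incidence_cols_mat_delete[OF M i0 j _, of j'] cols that by simp
      with mat_delete_carrier[OF M] show ?thesis
        using Suc.IH by (simp add: cofactor_def abs_mult)
    qed
    ultimately show ?thesis by (simp add: abs_mult mult_le_one)
  next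
    case False
    have "(\<Sum>i<Suc m. M $$ (i, j)) = 0" if j: "j < Suc m" for j
    proof (rule incidence_col_cases[OF cols[OF j]], simp)
      fix a b assume "a < Suc m" "b < Suc m" "M $$ (a, j) = 1" "M $$ (b, j) = -1"
        and zero: "\<And>i. i < Suc m \<Longrightarrow> i \<noteq> a \<Longrightarrow> i \<noteq> b \<Longrightarrow> M $$ (i, j) = 0"
      then have "(\<Sum>i<Suc m. M $$ (i, j)) = (\<Sum>i\<in>{a, b}. M $$ (i, j))"
        by (intro sum.mono_neutral_right) auto
      also have "\<dots> = 0" using \<open>M $$ (a, j) = 1\<close> \<open>M $$ (b, j) = -1\<close> by (cases "a = b") auto
      finally show ?thesis .
    next
      fix i0 assume "i0 < Suc m" "\<And>i. i < Suc m \<Longrightarrow> i \<noteq> i0 \<Longrightarrow> M $$ (i, j) = 0"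
      with False j show ?thesis by blast
    qed
    then show ?thesis using det_eq_0_if_col_sums_0[OF M] by simp
  qed
qed

lemma det_sub_col_from_cols:
  fixes M :: "'a :: comm_ring_1 mat"
  assumes M: "M \<in> carrier_mat n n" and j0: "j0 < n"
    and S: "finite S" "S \<subseteq> {..<n}" "j0 \<notin> S"
  shows "det (mat n n (\<lambda>(i, j). if j \<in> S then M $$ (i, j) - M $$ (i, j0) else M $$ (i, j))) = det M"
  using S
proof (induction S rule: finite_induct)
  case empty
  have "mat n n (\<lambda>(i, j). if j \<in> {} then M $$ (i, j) - M $$ (i, j0) else M $$ (i, j)) = M"
    by (rule eq_matI) (use M in auto)
  then show ?case by simp
next
  case (insert s S)
  let ?MS = "mat n n (\<lambda>(i, j). if j \<in> S then M $$ (i, j) - M $$ (i, j0) else M $$ (i, j))"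
  have "mat n n (\<lambda>(i, j). if j \<in> insert s S then M $$ (i, j) - M $$ (i, j0) else M $$ (i, j))
        = addcol (-1) s j0 ?MS"
    by (rule eq_matI) (use insert j0 in auto)
  also have "det \<dots> = det ?MS"
    using insert by (intro det_addcol[OF j0]) auto
  also have "\<dots> = det M" using insert by simp
  finally show ?case .
qed

lemma incidence_col_apex_diff:
  assumes "apex_col n c" and "apex_col n d"
  shows "incidence_col n (\<lambda>i. c i - d i)"
proof -
  obtain k l where "\<And>i. i < n \<Longrightarrow> c i = (if i = 0 \<or> i = k then 1 else 0)"
    and "\<And>i. i < n \<Longrightarrow> d i = (if i = 0 \<or> i = l then 1 else 0)" and "0 < k" "0 < l"
    using assms unfolding apex_col_def by blast
  then show ?thesis by (auto simp: incidence_col_def)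
qed

lemma abs_det_le_2_if_one_apex_col:
  fixes M :: "'a :: linordered_idom mat"
  assumes M: "M \<in> carrier_mat n n" and j0: "j0 < n" and apex: "apex_col n (\<lambda>i. M $$ (i, j0))"
    and cols: "\<And>j. j < n \<Longrightarrow> j \<noteq> j0 \<Longrightarrow> incidence_col n (\<lambda>i. M $$ (i, j))"
  shows "\<bar>det M\<bar> \<le> 2"
proof -
  obtain k where k: "0 < k" "k < n" and col: "\<And>i. i < n \<Longrightarrow> M $$ (i, j0) = (if i = 0 \<or> i = k then 1 else 0)"
    using apex unfolding apex_col_def by blast
  have cof: "\<bar>cofactor M i j0\<bar> \<le> 1" if "i < n" for i
    using abs_det_le_1_if_incidence_cols[OF mat_delete_carrier[OF M] incidence_cols_mat_delete[OF M that j0 cols]]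
    by (simp add: cofactor_def abs_mult)
  have "det M = cofactor M 0 j0 + cofactor M k j0"
    using laplace_expansion_column_support[OF M j0, of "{0, k}"] k col by simp
  then have "\<bar>det M\<bar> \<le> \<bar>cofactor M 0 j0\<bar> + \<bar>cofactor M k j0\<bar>" by simp
  also have "\<dots> \<le> 2" using cof[of 0] cof[of k] k by simp
  finally show ?thesis .
qed

theorem abs_det_le_2_if_incidence_or_apex_cols:
  fixes M :: "'a :: linordered_idom mat"
  assumes M: "M \<in> carrier_mat n n"
    and cols: "\<And>j. j < n \<Longrightarrow> incidence_col n (\<lambda>i. M $$ (i, j)) \<or> apex_col n (\<lambda>i. M $$ (i, j))"
  shows "\<bar>det M\<bar> \<le> 2"
proof (cases "\<forall>j<n. incidence_col n (\<lambda>i. M $$ (i, j))")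
  case True
  then show ?thesis using abs_det_le_1_if_incidence_cols[OF M] by force
next
  case False
  then obtain j0 where j0: "j0 < n" and apex0: "apex_col n (\<lambda>i. M $$ (i, j0))"
    using cols by blast
  define S where "S = {j. j < n \<and> j \<noteq> j0 \<and> \<not> incidence_col n (\<lambda>i. M $$ (i, j))}"
  define M' where "M' = mat n n (\<lambda>(i, j). if j \<in> S then M $$ (i, j) - M $$ (i, j0) else M $$ (i, j))"
  have "det M' = det M"
    unfolding M'_def by (rule det_sub_col_from_cols[OF M j0]) (auto simp: S_def)
  moreover have "\<bar>det M'\<bar> \<le> 2"
  proof (rule abs_det_le_2_if_one_apex_col)
    show "M' \<in> carrier_mat n n" by (simp add: M'_def)
    show "apex_col n (\<lambda>i. M' $$ (i, j0))"
      using apex0 j0 by (subst apex_col_cong[where d = "\<lambda>i. M $$ (i, j0)"]) (auto simp: M'_def S_def)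
    fix j assume j: "j < n" "j \<noteq> j0"
    show "incidence_col n (\<lambda>i. M' $$ (i, j))"
    proof (cases "j \<in> S")
      case True
      then have "apex_col n (\<lambda>i. M $$ (i, j))" using cols S_def by blast
      then have "incidence_col n (\<lambda>i. M $$ (i, j) - M $$ (i, j0))"
        using apex0 by (rule incidence_col_apex_diff)
      then show ?thesis using True j by (subst incidence_col_cong) (auto simp: M'_def)
    next
      case False
      then have "incidence_col n (\<lambda>i. M $$ (i, j))" using j S_def by blast
      then show ?thesis using False j by (subst incidence_col_cong) (auto simp: M'_def)
    qed
  qed (use j0 in auto)
  ultimately show ?thesis by simp
qed

lemma pick_lessThan: "j < n \<Longrightarrow> pick {..<n} j = j"
  using pick_reduce_set[of j n UNIV] by (simp add: pick_UNIV lessThan_def)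

lemma
  assumes A: "A \<in> carrier_mat n m" and J: "J \<subseteq> {..<m}"
  shows submatrix_all_rows_carrier: "submatrix A {..<n} J \<in> carrier_mat n (card J)"
    and submatrix_all_rows_index:
      "\<And>i j. i < n \<Longrightarrow> j < card J \<Longrightarrow> submatrix A {..<n} J $$ (i, j) = A $$ (i, pick J j)"
proof -
  have rows: "card {i. i < dim_row A \<and> i \<in> {..<n}} = n"
    using A by (simp add: Collect_conj_eq Int_absorb1 lessThan_def[symmetric])
  have cols: "card {j. j < dim_col A \<and> j \<in> J} = card J"
    using A J by (metis (no_types, lifting) carrier_matD(2) lessThan_iff mem_Collect_eq subset_iff subset_antisym)
  show "submatrix A {..<n} J \<in> carrier_mat n (card J)"
    by (intro carrier_matI) (simp_all only: dim_submatrix rows cols)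
  fix i j assume "i < n" "j < card J"
  then have "submatrix A {..<n} J $$ (i, j) = A $$ (pick {..<n} i, pick J j)"
    by (intro submatrix_index) (simp_all only: rows cols)
  with \<open>i < n\<close> show "submatrix A {..<n} J $$ (i, j) = A $$ (i, pick J j)"
    by (simp add: pick_lessThan)
qed

lemma int_mat_rank_ge_identity_block:
  assumes A: "A \<in> carrier_mat n m" and "n \<le> m"
    and id: "\<And>i j. i < n \<Longrightarrow> j < n \<Longrightarrow> A $$ (i, j) = (if i = j then 1 else 0)"
  shows "n \<le> int_mat_rank A"
proof -
  let ?Aq = "map_mat rat_of_int A :: rat mat"
  have Aq: "?Aq \<in> carrier_mat n m" using A by simp
  have J: "{..<n} \<subseteq> {..<m}" using \<open>n \<le> m\<close> by auto
  have "submatrix ?Aq {..<n} {..<n} = 1\<^sub>m n"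
    using submatrix_all_rows_carrier[OF Aq J] A \<open>n \<le> m\<close>
    by (intro eq_matI) (auto simp: submatrix_all_rows_index[OF Aq J] pick_lessThan id)
  then have "det (submatrix ?Aq {..<n} {..<n}) \<noteq> 0" by simp
  from vec_space.rank_gt_minor[OF Aq this] have "card {j. j < m \<and> j \<in> {..<n}} \<le> vec_space.rank n ?Aq" .
  moreover have "{j. j < m \<and> j \<in> {..<n}} = {..<n}" using J by auto
  ultimately show ?thesis using A by (simp add: int_mat_rank_def)
qed

lemma A_mat_carrier: "A_mat r \<in> carrier_mat r (length (I_cols r @ D_cols r @ B_cols r))"
  unfolding A_mat_def by (rule mat_of_cols_carrier)

lemma A_mat_index:
  "i < r \<Longrightarrow> j < length (I_cols r @ D_cols r @ B_cols r) \<Longrightarrow>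
    A_mat r $$ (i, j) = (I_cols r @ D_cols r @ B_cols r) ! j $ i"
  unfolding A_mat_def by (rule mat_of_cols_index)

lemma int_mat_rank_A_mat: "r \<le> int_mat_rank (A_mat r)"
  by (rule int_mat_rank_ge_identity_block[OF A_mat_carrier])
    (auto simp: A_mat_index I_cols_def nth_append)

lemma A_cols_incidence_or_apex:
  assumes "v \<in> set (I_cols r @ D_cols r @ B_cols r)"
  shows "incidence_col r (($) v) \<or> apex_col r (($) v)"
proof -
  consider (I) c where "c < r" "v = unit_vec r c"
    | (D) a b where "a < b" "b < r" "v = vec r (\<lambda>k. if k = a then 1 else if k = b then -1 else 0)"
    | (B) c where "c < r - 1" "v = vec r (\<lambda>k. if k = 0 \<or> k = Suc c then 1 else 0)"
    using assms by (auto simp: I_cols_def D_cols_def B_cols_def Suc_le_eq)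
  then show ?thesis
  proof cases
    case I
    then show ?thesis by (auto simp: incidence_col_def unit_vec_def)
  next
    case D
    then show ?thesis by (auto simp: incidence_col_def)
  next
    case B
    then show ?thesis unfolding apex_col_def by (intro disjI2 exI[of _ "Suc c"]) auto
  qed
qed

lemma A_mat_cols:
  assumes "j < dim_col (A_mat r)"
  shows "incidence_col r (\<lambda>i. A_mat r $$ (i, j)) \<or> apex_col r (\<lambda>i. A_mat r $$ (i, j))"
proof -
  let ?v = "(I_cols r @ D_cols r @ B_cols r) ! j"
  have j: "j < length (I_cols r @ D_cols r @ B_cols r)" using assms A_mat_carrier[of r] by simp
  have "incidence_col r (($) ?v) \<or> apex_col r (($) ?v)"
    using j by (intro A_cols_incidence_or_apex nth_mem)
  moreover have "\<And>i. i < r \<Longrightarrow> A_mat r $$ (i, j) = ?v $ i" using j by (simp add: A_mat_index)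
  ultimately show ?thesis by (simp cong: incidence_col_cong apex_col_cong)
qed

lemma pick_less_of_subset_lessThan:
  assumes "J \<subseteq> {..<m}" and "j < card J"
  shows "pick J j < m"
proof -
  have "{a. a < m \<and> a \<in> J} = J" using assms(1) by auto
  with assms(2) show ?thesis using pick_le[of j m J] by simp
qed

lemma A_mat_submatrix_cols:
  assumes J: "J \<subseteq> {..<dim_col (A_mat r)}" and j: "j < card J"
  shows "incidence_col r (\<lambda>i. submatrix (A_mat r) {..<r} J $$ (i, j)) \<or>
    apex_col r (\<lambda>i. submatrix (A_mat r) {..<r} J $$ (i, j))"
proof -
  have A: "A_mat r \<in> carrier_mat r (dim_col (A_mat r))" using A_mat_carrier[of r] by simp
  from A_mat_cols[OF pick_less_of_subset_lessThan[OF J j]] j show ?thesis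
    by (simp add: submatrix_all_rows_index[OF A J] cong: incidence_col_cong apex_col_cong)
qed

theorem lemma3p1:
  fixes r :: nat
  assumes "r \<ge> 2"
  shows "delta_modular 2 (A_mat r)"
  unfolding delta_modular_def
proof (intro allI impI)
  fix I J
  assume I: "I \<subseteq> {..<dim_row (A_mat r)}" and J: "J \<subseteq> {..<dim_col (A_mat r)}"
    and card_I: "card I = int_mat_rank (A_mat r)" and card_J: "card J = int_mat_rank (A_mat r)"
  have A: "A_mat r \<in> carrier_mat r (dim_col (A_mat r))" using A_mat_carrier[of r] by simp
  have "card I \<le> r" using I A card_mono[of "{..<r}" I] by simp
  with int_mat_rank_A_mat[of r] card_I card_J have "card I = r" "card J = r" by simp_all
  with I A have "I = {..<r}" by (intro card_subset_eq) auto
  have M: "submatrix (A_mat r) {..<r} J \<in> carrier_mat r r"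
    using submatrix_all_rows_carrier[OF A J] \<open>card J = r\<close> by simp
  show "\<bar>det (submatrix (A_mat r) I J)\<bar> \<le> 2"
    unfolding \<open>I = {..<r}\<close>
    by (rule abs_det_le_2_if_incidence_or_apex_cols[OF M A_mat_submatrix_cols[OF J]])
      (simp add: \<open>card J = r\<close>)
qed

end
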